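(* Let $U=\{\xi_1,\dots,\xi_p\}\subset\mathbb{R}^k$ be finite, and for $j\in\Lambda=\{1,\dots,m\}$ let $f_j:\mathbb{R}^n\times U\to\mathbb{R}$ be such that $x\mapsto f_j(x,\xi_i)$ is continuously differentiable for each $i\in\bar\Lambda=\{1,\dots,p\}$. Let $\Phi=(\Phi_1,\dots,\Phi_m)$ with $\Phi_j(x)=\max_{i\in\bar\Lambda} f_j(x,\xi_i)$. If $\tilde x\in\mathbb{R}^n$ is a weak Pareto optimal solution for $\Phi$, then $\tilde x$ is a critical point for $\Phi$. Moreover, if in addition $x\mapsto f_j(x,\xi_i)$ is convex for every $i\in\bar\Lambda$ and $j\in\Lambda$, then every critical point for $\Phi$ is a weak Pareto optimal solution for $\Phi$; thus under convexity weak Pareto optimality and criticality are equivalent.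
   Context: For $x\in\mathbb{R}^n$ and $j\in\Lambda$, $I_j(x)=\{i\in\bar\Lambda: f_j(x,\xi_i)=\Phi_j(x)\}$. A point $x^*$ is a critical point for $\Phi$ if there is no $v\in\mathbb{R}^n$ such that $\nabla f_j(x^*,\xi_i)^Tv<0$ for all $j\in\Lambda$ and all $i\in I_j(x^* )$. A point $x^*$ is a weak Pareto optimal solution for $\Phi$ if there is no $x\in\mathbb{R}^n$ with $\Phi_j(x)<\Phi_j(x^* )$ for all $j\in\Lambda$. Gradients are with respect to $x$. *)

theory Defs
  imports "HOL-Analysis.Analysis"
begin

definition C1_fun :: "(real^'n \<Rightarrow> real) \<Rightarrow> bool" where
  "C1_fun g \<longleftrightarrow> (\<exists>G. (\<forall>x. GDERIV g x :> G x) \<and> continuous_on UNIV G)"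

definition grad :: "(real^'n \<Rightarrow> real) \<Rightarrow> real^'n \<Rightarrow> real^'n" where
  "grad g x = (THE D. GDERIV g x :> D)"

definition Phi :: "(nat \<Rightarrow> real^'n \<Rightarrow> real^'k \<Rightarrow> real) \<Rightarrow> (nat \<Rightarrow> real^'k) \<Rightarrow> nat
                   \<Rightarrow> nat \<Rightarrow> real^'n \<Rightarrow> real" where
  "Phi f \<xi> p j x = Max ((\<lambda>i. f j x (\<xi> i)) ` {1..p})"

definition Iact :: "(nat \<Rightarrow> real^'n \<Rightarrow> real^'k \<Rightarrow> real) \<Rightarrow> (nat \<Rightarrow> real^'k) \<Rightarrow> nat
                   \<Rightarrow> nat \<Rightarrow> real^'n \<Rightarrow> nat set" where
  "Iact f \<xi> p j x = {i \<in> {1..p}. f j x (\<xi> i) = Phi f \<xi> p j x}"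

definition critical_point :: "(nat \<Rightarrow> real^'n \<Rightarrow> real^'k \<Rightarrow> real) \<Rightarrow> (nat \<Rightarrow> real^'k) \<Rightarrow> nat
                   \<Rightarrow> nat \<Rightarrow> real^'n \<Rightarrow> bool" where
  "critical_point f \<xi> m p x \<longleftrightarrow>
     \<not> (\<exists>v. \<forall>j\<in>{1..m}. \<forall>i\<in>Iact f \<xi> p j x. grad (\<lambda>y. f j y (\<xi> i)) x \<bullet> v < 0)"

definition weak_pareto :: "(nat \<Rightarrow> real^'n \<Rightarrow> real^'k \<Rightarrow> real) \<Rightarrow> (nat \<Rightarrow> real^'k) \<Rightarrow> nat
                   \<Rightarrow> nat \<Rightarrow> real^'n \<Rightarrow> bool" where
  "weak_pareto f \<xi> m p x \<longleftrightarrow>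
     \<not> (\<exists>y. \<forall>j\<in>{1..m}. Phi f \<xi> p j y < Phi f \<xi> p j x)"

end

theory Submission
  imports Defs
begin

(* Weak Pareto optimality implies criticality: a direction v that is a strict descent direction
   for every active piece f_j(., xi_i) also decreases, for small t > 0, the inactive pieces (by
   continuity, they start strictly below Phi_j), so x + t v improves every Phi_j.  Conversely,
   under convexity, a point y improving every Phi_j gives, for every active piece, the gradient
   inequality grad f_j(x, xi_i) . (y - x) <= f_j(y, xi_i) - Phi_j(x) <= Phi_j(y) - Phi_j(x) < 0,
   so v = y - x witnesses that x is not critical. *)

lemma grad_eqI:
  assumes "GDERIV g x :> D"
  shows "grad g x = D"
  unfolding grad_def
proof (rule the_equality)
  fix D' assume "GDERIV g x :> D'"
  then have "(\<lambda>h. h \<bullet> D') = (\<lambda>h. h \<bullet> D)"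
    using assms unfolding gderiv_def by (rule has_derivative_unique)
  then have "(D' - D) \<bullet> D' = (D' - D) \<bullet> D"
    by meson
  then have "(D' - D) \<bullet> (D' - D) = 0"
    by (simp add: inner_diff_right)
  then show "D' = D"
    by simp
qed (fact assms)

lemma C1_fun_gderiv_grad:
  assumes "C1_fun g"
  shows "GDERIV g x :> grad g x"
proof -
  obtain G where "\<And>y. GDERIV g y :> G y"
    using assms unfolding C1_fun_def by blast
  then show ?thesis
    using grad_eqI by metis
qed

lemma gderiv_along_line:
  assumes "GDERIV g x :> D"
  shows "((\<lambda>t. g (x + t *\<^sub>R v)) has_real_derivative v \<bullet> D) (at 0)"
proof -
  have "((\<lambda>t::real. x + t *\<^sub>R v) has_derivative (\<lambda>t. t *\<^sub>R v)) (at 0)"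
    by (auto intro!: derivative_eq_intros)
  moreover have "(g has_derivative (\<lambda>h. h \<bullet> D)) (at (x + 0 *\<^sub>R v))"
    using assms unfolding gderiv_def by simp
  ultimately have "((\<lambda>t. g (x + t *\<^sub>R v)) has_derivative (\<lambda>t. (t *\<^sub>R v) \<bullet> D)) (at 0)"
    using has_derivative_compose by fastforce
  moreover have "(\<lambda>t. (t *\<^sub>R v) \<bullet> D) = (*) (v \<bullet> D)"
    by (simp add: fun_eq_iff)
  ultimately show ?thesis
    unfolding has_field_derivative_def by simp
qed

lemma convex_on_along_line:
  assumes "convex_on UNIV g"
  shows "convex_on UNIV (\<lambda>t::real. g (x + t *\<^sub>R v))"
proof (rule convex_onI)
  fix t a b :: real assume "0 < t" "t < 1"
  moreover have "x + ((1 - t) *\<^sub>R a + t *\<^sub>R b) *\<^sub>R v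
      = (1 - t) *\<^sub>R (x + a *\<^sub>R v) + t *\<^sub>R (x + b *\<^sub>R v)"
    by (simp add: algebra_simps)
  ultimately show "g (x + ((1 - t) *\<^sub>R a + t *\<^sub>R b) *\<^sub>R v)
      \<le> (1 - t) * g (x + a *\<^sub>R v) + t * g (x + b *\<^sub>R v)"
    using convex_onD[OF assms] by simp
qed simp

lemma convex_on_gderiv_above_tangent:
  assumes "convex_on UNIV g" and "GDERIV g x :> D"
  shows "(y - x) \<bullet> D \<le> g y - g x"
proof -
  have "convex_on UNIV (\<lambda>t::real. g (x + t *\<^sub>R (y - x)))"
    using assms(1) by (rule convex_on_along_line)
  moreover have "((\<lambda>t. g (x + t *\<^sub>R (y - x))) has_real_derivative (y - x) \<bullet> D) (at 0)"
    using assms(2) by (rule gderiv_along_line)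
  ultimately show ?thesis
    using convex_on_imp_above_tangent[where x = 1] by fastforce
qed

lemma gderiv_descent_eventually:
  assumes "GDERIV g x :> D" and "v \<bullet> D < 0"
  shows "eventually (\<lambda>t. g (x + t *\<^sub>R v) < g x) (at_right 0)"
proof -
  obtain d where "d > 0" and "\<And>h. 0 < h \<Longrightarrow> h < d \<Longrightarrow> g (x + h *\<^sub>R v) < g x"
    using DERIV_neg_dec_right[OF gderiv_along_line[OF assms(1)] assms(2)] by auto
  then show ?thesis
    unfolding eventually_at_right_field by auto
qed

lemma gderiv_eventually_less_along_line:
  assumes "GDERIV g x :> D" and "g x < c"
  shows "eventually (\<lambda>t. g (x + t *\<^sub>R v) < c) (at_right 0)"
proof -
  have "((\<lambda>t. g (x + t *\<^sub>R v)) \<longlongrightarrow> g x) (at_right 0)"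
    using DERIV_isCont[OF gderiv_along_line[OF assms(1)]]
    by (simp add: isCont_def filterlim_at_split)
  then show ?thesis
    using assms(2) by (rule order_tendstoD)
qed

lemma Phi_ge:
  assumes "i \<in> {1..p}"
  shows "f j x (\<xi> i) \<le> Phi f \<xi> p j x"
  unfolding Phi_def using assms by simp

lemma Phi_less_iff:
  assumes "p \<ge> 1"
  shows "Phi f \<xi> p j x < c \<longleftrightarrow> (\<forall>i\<in>{1..p}. f j x (\<xi> i) < c)"
  unfolding Phi_def using assms by simp

lemma weak_pareto_imp_critical_point:
  assumes "p \<ge> 1"
    and diff: "\<And>j i. j \<in> {1..m} \<Longrightarrow> i \<in> {1..p} \<Longrightarrow>
      GDERIV (\<lambda>y. f j y (\<xi> i)) x :> grad (\<lambda>y. f j y (\<xi> i)) x"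
    and "weak_pareto f \<xi> m p x"
  shows "critical_point f \<xi> m p x"
proof (rule ccontr)
  assume "\<not> critical_point f \<xi> m p x"
  then obtain v where descent: "\<And>j i. j \<in> {1..m} \<Longrightarrow> i \<in> Iact f \<xi> p j x \<Longrightarrow>
      grad (\<lambda>y. f j y (\<xi> i)) x \<bullet> v < 0"
    unfolding critical_point_def by blast
  have "eventually (\<lambda>t. f j (x + t *\<^sub>R v) (\<xi> i) < Phi f \<xi> p j x) (at_right 0)"
    if j: "j \<in> {1..m}" and i: "i \<in> {1..p}" for j i
  proof (cases "i \<in> Iact f \<xi> p j x")
    case True
    then have "f j x (\<xi> i) = Phi f \<xi> p j x"
      unfolding Iact_def by simp
    then show ?thesis
      using gderiv_descent_eventually[OF diff[OF j i]] descent[OF j True]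
      by (simp add: inner_commute)
  next
    case False
    then have "f j x (\<xi> i) < Phi f \<xi> p j x"
      using Phi_ge[OF i] i unfolding Iact_def by (simp add: order_less_le)
    then show ?thesis
      using gderiv_eventually_less_along_line[OF diff[OF j i]] by blast
  qed
  then have "eventually (\<lambda>t. \<forall>j\<in>{1..m}. \<forall>i\<in>{1..p}.
      f j (x + t *\<^sub>R v) (\<xi> i) < Phi f \<xi> p j x) (at_right 0)"
    by (intro eventually_ball_finite ballI) auto
  then obtain t where "\<forall>j\<in>{1..m}. \<forall>i\<in>{1..p}. f j (x + t *\<^sub>R v) (\<xi> i) < Phi f \<xi> p j x"
    using eventually_happens'[OF trivial_limit_at_right_real] by blast
  then have "\<forall>j\<in>{1..m}. Phi f \<xi> p j (x + t *\<^sub>R v) < Phi f \<xi> p j x"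
    using Phi_less_iff[OF \<open>p \<ge> 1\<close>] by blast
  then show False
    using \<open>weak_pareto f \<xi> m p x\<close> unfolding weak_pareto_def by blast
qed

lemma critical_point_imp_weak_pareto:
  assumes convex: "\<And>j i. j \<in> {1..m} \<Longrightarrow> i \<in> {1..p} \<Longrightarrow> convex_on UNIV (\<lambda>y. f j y (\<xi> i))"
    and diff: "\<And>j i. j \<in> {1..m} \<Longrightarrow> i \<in> {1..p} \<Longrightarrow>
      GDERIV (\<lambda>y. f j y (\<xi> i)) x :> grad (\<lambda>y. f j y (\<xi> i)) x"
    and "critical_point f \<xi> m p x"
  shows "weak_pareto f \<xi> m p x"
proof (rule ccontr)
  assume "\<not> weak_pareto f \<xi> m p x"
  then obtain y where improves: "\<And>j. j \<in> {1..m} \<Longrightarrow> Phi f \<xi> p j y < Phi f \<xi> p j x"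
    unfolding weak_pareto_def by blast
  have "grad (\<lambda>z. f j z (\<xi> i)) x \<bullet> (y - x) < 0"
    if j: "j \<in> {1..m}" and "i \<in> Iact f \<xi> p j x" for j i
  proof -
    have i: "i \<in> {1..p}" and active: "f j x (\<xi> i) = Phi f \<xi> p j x"
      using \<open>i \<in> Iact f \<xi> p j x\<close> unfolding Iact_def by auto
    have "(y - x) \<bullet> grad (\<lambda>z. f j z (\<xi> i)) x \<le> f j y (\<xi> i) - f j x (\<xi> i)"
      by (rule convex_on_gderiv_above_tangent[OF convex[OF j i] diff[OF j i]])
    also have "\<dots> \<le> Phi f \<xi> p j y - Phi f \<xi> p j x"
      using Phi_ge[OF i] active by simp
    also have "\<dots> < 0"
      using improves[OF j] by simp
    finally show ?thesis
      by (simp add: inner_commute)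
  qed
  then show False
    using \<open>critical_point f \<xi> m p x\<close> unfolding critical_point_def by blast
qed

theorem lemma4p2:
  fixes f :: "nat \<Rightarrow> real^'n \<Rightarrow> real^'k \<Rightarrow> real"
    and \<xi> :: "nat \<Rightarrow> real^'k"
    and m p :: nat
  assumes "m \<ge> 1" and "p \<ge> 1"
    and C1: "\<forall>j\<in>{1..m}. \<forall>i\<in>{1..p}. C1_fun (\<lambda>x. f j x (\<xi> i))"
  shows "(\<forall>x. weak_pareto f \<xi> m p x \<longrightarrow> critical_point f \<xi> m p x)
       \<and> ((\<forall>j\<in>{1..m}. \<forall>i\<in>{1..p}. convex_on UNIV (\<lambda>x. f j x (\<xi> i))) \<longrightarrow>
            (\<forall>x. critical_point f \<xi> m p x \<longrightarrow> weak_pareto f \<xi> m p x))"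
proof -
  have diff: "GDERIV (\<lambda>y. f j y (\<xi> i)) x :> grad (\<lambda>y. f j y (\<xi> i)) x"
    if "j \<in> {1..m}" "i \<in> {1..p}" for j i x
    using C1 that by (blast intro: C1_fun_gderiv_grad)
  show ?thesis
  proof (intro conjI allI impI)
    fix x
    assume "weak_pareto f \<xi> m p x"
    with \<open>p \<ge> 1\<close> diff show "critical_point f \<xi> m p x"
      by (rule weak_pareto_imp_critical_point)
  next
    fix x
    assume "\<forall>j\<in>{1..m}. \<forall>i\<in>{1..p}. convex_on UNIV (\<lambda>x. f j x (\<xi> i))"
      and "critical_point f \<xi> m p x"
    with diff show "weak_pareto f \<xi> m p x"
      by (blast intro: critical_point_imp_weak_pareto)
  qed
qed

end
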